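(* Every equilibrium $(S,I_1,I_2,I_{12},R)$ of the system below with all components nonnegative is of exactly one of the following types: (a) $(0,0,0,0,0)$; (b) $(0,0,0,0,R^{**})$ with $R^{**}=\frac{K}{b}(b-\mu_4')$; (c) $G_2=(S^{**},0,0,0,0)$; (d) $(S,I_1,0,0,R)$ with $S,I_1,R>0$; (e) $(S,0,I_2,0,R)$ with $S,I_2,R>0$; (f) $(S,I_1,I_2,I_{12},R)$ with all five components positive. In particular there is no nonnegative equilibrium with $S=0$ and $I_1+I_2+I_{12}>0$, no nonnegative equilibrium with $I_{12}>0$ and $I_1I_2=0$, and no nonnegative equilibrium with $I_1I_2>0$ and $I_{12}=0$.
   Context: Consider, for $t\ge0$, the system $S'=\big(b(1-\tfrac{N}{K})-\alpha_1I_1-\alpha_2I_2-(\beta_1+\beta_2+\alpha_3)I_{12}-\mu_0\big)S$, $I_1'=\big(b(1-\tfrac{N}{K})+\alpha_1S-\eta_1I_{12}-\gamma_1I_2-\mu_1\big)I_1+\beta_1SI_{12}$, $I_2'=\big(b(1-\tfrac{N}{K})+\alpha_2S-\eta_2I_{12}-\gamma_2I_1-\mu_2\big)I_2+\beta_2SI_{12}$, $I_{12}'=\big(b(1-\tfrac{N}{K})+\alpha_3S+\eta_1I_1+\eta_2I_2-\mu_3\big)I_{12}+(\gamma_1+\gamma_2)I_1I_2$, $R'=\big(b(1-\tfrac{N}{K})-\mu_4'\big)R+\rho_1I_1+\rho_2I_2+\rho_3I_{12}$, where $N=S+I_1+I_2+I_{12}+R$. All parameters $b,K,\alpha_i,\beta_i,\gamma_i,\eta_i,\rho_i,\mu_0,\mu_i'$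 are positive and $\mu_i=\rho_i+\mu_i'$ for $i=1,2,3$. Standing assumptions: $b>\mu_0$, $b>\mu_i$ ($i=1,2,3$), $b>\mu_4'$, and $\mu_0<\mu_4'<\mu_j'$ for $j=1,2,3$. Set $\sigma_k=(\mu_k-\mu_0)/\alpha_k$ ($k=1,2,3$), assumed to satisfy $\sigma_1<\sigma_2<\sigma_3$, and $S^{**}=\frac{K}{b}(b-\mu_0)$. An equilibrium is a point at which all five right-hand sides vanish. *)

theory Defs
  imports Complex_Main
begin

definition equilibrium ::
  "real \<Rightarrow> real \<Rightarrow> real \<Rightarrow> real \<Rightarrow> real \<Rightarrow> real \<Rightarrow> real \<Rightarrow> real \<Rightarrow> real \<Rightarrow> real \<Rightarrow>
   real \<Rightarrow> real \<Rightarrow> real \<Rightarrow> real \<Rightarrow> real \<Rightarrow> real \<Rightarrow> real \<Rightarrow> real \<Rightarrow> real \<Rightarrow>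
   real \<Rightarrow> real \<Rightarrow> real \<Rightarrow> real \<Rightarrow> real \<Rightarrow> bool" where
  "equilibrium b K a1 a2 a3 be1 be2 g1 g2 e1 e2 r1 r2 r3 m0 m1' m2' m3' m4' S I1 I2 I12 R \<longleftrightarrow>
    (let N = S + I1 + I2 + I12 + R; L = b * (1 - N / K);
         m1 = r1 + m1'; m2 = r2 + m2'; m3 = r3 + m3' in
     (L - a1 * I1 - a2 * I2 - (be1 + be2 + a3) * I12 - m0) * S = 0 \<and>
     (L + a1 * S - e1 * I12 - g1 * I2 - m1) * I1 + be1 * S * I12 = 0 \<and>
     (L + a2 * S - e2 * I12 - g2 * I1 - m2) * I2 + be2 * S * I12 = 0 \<and>
     (L + a3 * S + e1 * I1 + e2 * I2 - m3) * I12 + (g1 + g2) * I1 * I2 = 0 \<and>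
     (L - m4') * R + r1 * I1 + r2 * I2 + r3 * I12 = 0)"

end

theory Submission
  imports Defs
begin

text \<open>Write \<open>L = b (1 - N/K)\<close> for the common per-capita birth rate. The recovered equation
  \<open>(L - \<mu>\<^sub>4') R + \<rho>\<^sub>1 I\<^sub>1 + \<rho>\<^sub>2 I\<^sub>2 + \<rho>\<^sub>3 I\<^sub>1\<^sub>2 = 0\<close> shows that any infection forces
  \<open>R > 0\<close> and \<open>L < \<mu>\<^sub>4'\<close>. Without susceptibles, each infected equation would instead force
  \<open>L \<ge> \<mu>\<^sub>i > \<mu>\<^sub>4'\<close>, so there is no infection. With susceptibles, the coupling terms
  \<open>\<beta>\<^sub>i S I\<^sub>1\<^sub>2\<close> make \<open>I\<^sub>1\<^sub>2 > 0\<close> feed both single infections, while \<open>(\<gamma>\<^sub>1 + \<gamma>\<^sub>2) I\<^sub>1 I\<^sub>2\<close>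
  makes \<open>I\<^sub>1\<^sub>2 = 0\<close> kill one of them. The remaining cases reduce to the logistic equation.\<close>

lemma logistic_equilibrium:
  fixes b K m x :: real
  assumes "b > 0" "K > 0" "(b * (1 - x / K) - m) * x = 0"
  shows "x = 0 \<or> x = K / b * (b - m)"
proof (cases "x = 0")
  case False
  hence "b * (1 - x / K) = m" using assms(3) by simp
  thus ?thesis using assms(1,2) by (simp add: field_simps)
qed simp

lemma susceptible_only_equilibrium:
  fixes b K m0 m4' S R :: real
  assumes "b > 0" "K > 0" "m0 < m4'" "S > 0"
    and E1: "(b * (1 - (S + R) / K) - m0) * S = 0"
    and E5: "(b * (1 - (S + R) / K) - m4') * R = 0"
  shows "R = 0 \<and> S = K / b * (b - m0)"
proof -
  have "b * (1 - (S + R) / K) = m0" using E1 \<open>S > 0\<close> by simp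
  moreover from this have "R = 0" using E5 \<open>m0 < m4'\<close> by simp
  ultimately show ?thesis using \<open>b > 0\<close> \<open>K > 0\<close> by (simp add: field_simps)
qed

lemma recovered_balance:
  fixes L m4' r1 r2 r3 I1 I2 I12 R :: real
  assumes E5: "(L - m4') * R + r1 * I1 + r2 * I2 + r3 * I12 = 0"
    and r: "r1 > 0" "r2 > 0" "r3 > 0"
    and nonneg: "I1 \<ge> 0" "I2 \<ge> 0" "I12 \<ge> 0" "R \<ge> 0"
    and infected: "I1 + I2 + I12 > 0"
  shows "R > 0" and "L < m4'"
proof -
  have "I1 > 0 \<or> I2 > 0 \<or> I12 > 0" using nonneg infected by linarith
  hence "r1 * I1 > 0 \<or> r2 * I2 > 0 \<or> r3 * I12 > 0" using r by auto
  moreover have "r1 * I1 \<ge> 0" "r2 * I2 \<ge> 0" "r3 * I12 \<ge> 0" using r nonneg by simp_all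
  ultimately have "r1 * I1 + r2 * I2 + r3 * I12 > 0" by linarith
  hence "(L - m4') * R < 0" using E5 by linarith
  thus "R > 0" "L < m4'"
    using nonneg(4) by (auto simp: mult_less_0_iff)
qed

lemma equilibrium_without_susceptibles_uninfected:
  fixes L a1 a2 a3 be1 be2 e1 e2 g1 g2 m1 m2 m3 m4' r1 r2 r3 S I1 I2 I12 R :: real
  assumes S0: "S = 0"
    and E2: "(L + a1 * S - e1 * I12 - g1 * I2 - m1) * I1 + be1 * S * I12 = 0"
    and E3: "(L + a2 * S - e2 * I12 - g2 * I1 - m2) * I2 + be2 * S * I12 = 0"
    and E4: "(L + a3 * S + e1 * I1 + e2 * I2 - m3) * I12 + (g1 + g2) * I1 * I2 = 0"
    and E5: "(L - m4') * R + r1 * I1 + r2 * I2 + r3 * I12 = 0"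
    and pos: "e1 > 0" "e2 > 0" "g1 > 0" "g2 > 0" "r1 > 0" "r2 > 0" "r3 > 0"
    and hmu: "m4' < m1" "m4' < m2" "m4' < m3"
    and nonneg: "I1 \<ge> 0" "I2 \<ge> 0" "I12 \<ge> 0" "R \<ge> 0"
  shows "I1 = 0 \<and> I2 = 0 \<and> I12 = 0"
proof (rule ccontr)
  assume infected: "\<not> (I1 = 0 \<and> I2 = 0 \<and> I12 = 0)"
  hence "I1 + I2 + I12 > 0" using nonneg by linarith
  hence low: "L < m4'" using recovered_balance(2)[OF E5 pos(5-7) nonneg] by blast
  have contacts: "e1 * I12 \<ge> 0" "g1 * I2 \<ge> 0" "e2 * I12 \<ge> 0" "g2 * I1 \<ge> 0"
    using pos nonneg by simp_all
  have "I1 = 0"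
  proof (rule ccontr)
    assume "I1 \<noteq> 0"
    hence "L = e1 * I12 + g1 * I2 + m1" using E2 S0 by simp
    thus False using low hmu contacts by linarith
  qed
  moreover have "I2 = 0"
  proof (rule ccontr)
    assume "I2 \<noteq> 0"
    hence "L = e2 * I12 + g2 * I1 + m2" using E3 S0 by simp
    thus False using low hmu contacts by linarith
  qed
  moreover have "I12 = 0"
  proof (rule ccontr)
    assume "I12 \<noteq> 0"
    hence "L = m3" using E4 S0 \<open>I1 = 0\<close> \<open>I2 = 0\<close> by simp
    thus False using low hmu by simp
  qed
  ultimately show False using infected by blast
qed

lemma coinfection_needs_both_strains:
  fixes L a1 a2 e1 e2 g1 g2 m1 m2 be1 be2 S I1 I2 I12 :: real
  assumes E2: "(L + a1 * S - e1 * I12 - g1 * I2 - m1) * I1 + be1 * S * I12 = 0"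
    and E3: "(L + a2 * S - e2 * I12 - g2 * I1 - m2) * I2 + be2 * S * I12 = 0"
    and pos: "be1 > 0" "be2 > 0" "S > 0" "I12 > 0"
  shows "I1 \<noteq> 0" and "I2 \<noteq> 0"
  using assms by auto

lemma equilibriumD:
  assumes "equilibrium b K a1 a2 a3 be1 be2 g1 g2 e1 e2 r1 r2 r3 m0 m1' m2' m3' m4' S I1 I2 I12 R"
  defines "L \<equiv> b * (1 - (S + I1 + I2 + I12 + R) / K)"
  shows "(L - a1 * I1 - a2 * I2 - (be1 + be2 + a3) * I12 - m0) * S = 0"
    and "(L + a1 * S - e1 * I12 - g1 * I2 - (r1 + m1')) * I1 + be1 * S * I12 = 0"
    and "(L + a2 * S - e2 * I12 - g2 * I1 - (r2 + m2')) * I2 + be2 * S * I12 = 0"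
    and "(L + a3 * S + e1 * I1 + e2 * I2 - (r3 + m3')) * I12 + (g1 + g2) * I1 * I2 = 0"
    and "(L - m4') * R + r1 * I1 + r2 * I2 + r3 * I12 = 0"
  using assms unfolding equilibrium_def Let_def by auto

theorem mainTheorem4:
  fixes b K a1 a2 a3 be1 be2 g1 g2 e1 e2 r1 r2 r3 m0 m1' m2' m3' m4' :: real
    and S I1 I2 I12 R :: real
  assumes pos: "b > 0" "K > 0" "a1 > 0" "a2 > 0" "a3 > 0" "be1 > 0" "be2 > 0"
      "g1 > 0" "g2 > 0" "e1 > 0" "e2 > 0" "r1 > 0" "r2 > 0" "r3 > 0"
      "m0 > 0" "m1' > 0" "m2' > 0" "m3' > 0" "m4' > 0"
    and hb: "b > m0" "b > r1 + m1'" "b > r2 + m2'" "b > r3 + m3'" "b > m4'"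
    and hmu: "m0 < m4'" "m4' < m1'" "m4' < m2'" "m4' < m3'"
    and hsig: "(r1 + m1' - m0) / a1 < (r2 + m2' - m0) / a2"
      "(r2 + m2' - m0) / a2 < (r3 + m3' - m0) / a3"
    and eq: "equilibrium b K a1 a2 a3 be1 be2 g1 g2 e1 e2 r1 r2 r3 m0 m1' m2' m3' m4' S I1 I2 I12 R"
    and nonneg: "S \<ge> 0" "I1 \<ge> 0" "I2 \<ge> 0" "I12 \<ge> 0" "R \<ge> 0"
  shows "(S = 0 \<and> I1 = 0 \<and> I2 = 0 \<and> I12 = 0 \<and> R = 0)
       \<or> (S = 0 \<and> I1 = 0 \<and> I2 = 0 \<and> I12 = 0 \<and> R = K / b * (b - m4'))
       \<or> (S = K / b * (b - m0) \<and> I1 = 0 \<and> I2 = 0 \<and> I12 = 0 \<and> R = 0)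
       \<or> (S > 0 \<and> I1 > 0 \<and> I2 = 0 \<and> I12 = 0 \<and> R > 0)
       \<or> (S > 0 \<and> I1 = 0 \<and> I2 > 0 \<and> I12 = 0 \<and> R > 0)
       \<or> (S > 0 \<and> I1 > 0 \<and> I2 > 0 \<and> I12 > 0 \<and> R > 0)"
proof -
  define L where "L = b * (1 - (S + I1 + I2 + I12 + R) / K)"
  note E = equilibriumD[OF eq, folded L_def]
  have R_pos: "R > 0" if "I1 + I2 + I12 > 0"
    using recovered_balance(1)[OF E(5) pos(12-14) nonneg(2-5) that] .
  show ?thesis
  proof (cases "S = 0")
    case True
    have "m4' < r1 + m1'" "m4' < r2 + m2'" "m4' < r3 + m3'" using pos(12-14) hmu(2-4) by linarith+
    from equilibrium_without_susceptibles_uninfected[OF True E(2-5) pos(10,11,8,9,12-14)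
        this nonneg(2-5)]
    have uninfected: "I1 = 0" "I2 = 0" "I12 = 0" by simp_all
    have "(b * (1 - R / K) - m4') * R = 0" using E(5) by (simp add: uninfected True L_def)
    hence "R = 0 \<or> R = K / b * (b - m4')" by (rule logistic_equilibrium[OF pos(1,2)])
    thus ?thesis unfolding True uninfected by blast
  next
    case False
    hence "S > 0" using nonneg by simp
    show ?thesis
    proof (cases "I12 = 0")
      case False
      hence "I12 > 0" using nonneg by simp
      hence "I1 > 0" "I2 > 0"
        using coinfection_needs_both_strains[OF E(2,3) pos(6,7) \<open>S > 0\<close>] nonneg by auto
      thus ?thesis using R_pos \<open>S > 0\<close> \<open>I12 > 0\<close> by simp
    next
      case True
      hence "I1 * I2 = 0" using E(4) pos(8,9) by simp
      then consider "I1 = 0" "I2 = 0" | "I1 > 0" "I2 = 0" | "I1 = 0" "I2 > 0"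
        using nonneg by fastforce
      thus ?thesis
      proof cases
        case 1
        have "L = b * (1 - (S + R) / K)" using 1 True by (simp add: L_def)
        with E(1,5) 1 True show ?thesis
          using susceptible_only_equilibrium[OF pos(1,2) hmu(1) \<open>S > 0\<close>] by simp
      qed (use R_pos \<open>S > 0\<close> True in simp_all)
    qed
  qed
qed

end
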